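(* Let $1\le N\le M$ and let $u_1,\dots,u_N$ satisfy the genericity conditions: pairwise distinct, $au_j+b\neq0$, $eu_j+f\neq0$, $tu_j\neq u_k$ for $j\neq k$. Let $\mathcal{C}_N^{(1)},\dots,\mathcal{C}_N^{(N)}$ be any $2^N\times2^N$ matrices with $\sum_j\mathcal{C}_N^{(j)}=\mathcal{C}_N$ satisfying, for all $j$ and $k\neq j$, $\mathcal{C}_N^{(j)}\mathcal{A}_N=\frac{eu_j+f}{au_j+b}\mathcal{A}_N\mathcal{C}_N^{(j)}$, $(\mathcal{C}_N^{(j)})^2=0$, $\mathcal{C}_N^{(j)}\mathcal{C}_N^{(k)}=\frac{(eu_j+f)(au_k+b)(u_j-tu_k)}{(au_j+b)(eu_k+f)(tu_j-u_k)}\mathcal{C}_N^{(k)}\mathcal{C}_N^{(j)}$ (such matrices exist). Set \[K=\prod_{j=1}^N\Big(\frac{au_j+b}{eu_j+f}\Big)^j\,\mathrm{Tr}\big[Q\,\mathcal{A}_N^{M-N}\mathcal{C}_N^{(N)}\cdots\mathcal{C}_N^{(1)}\big].\] Then for every particle configuration $1\le x_1<\dots<x_N\le M$, \[\langle x_1\cdots x_N|B(u_N)\cdots B(u_1)|\Omega\rangle=K\sum_{\sigma\in S_N}\prod_{(j,k)\in\mathrm{Inv}(\sigma)}\frac{u_{\sigma(k)}-tu_{\sigma(j)}}{tu_{\sigma(k)}-u_{\sigma(j)}}\prod_{j=1}^N\Big(\frac{eu_{\sigma(j)}+f}{au_{\sigma(j)}+b}\Big)^{x_j}.\]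
   Context: Fix complex parameters $t,a,b,c,d,e,f$, all nonzero, with $t\neq1$, satisfying $cd+af=0$ and $tcd+be=0$. The $L$-operator $L_{aj}(u)$ on $W_a\otimes V_j$ ($W_a\cong V_j\cong\mathbb{C}^2$ with basis $|0\rangle,|1\rangle$) has matrix elements $[L(u)]^{\gamma\delta}_{\alpha\beta}={}_a\langle\gamma|{}_j\langle\delta|L_{aj}(u)|\alpha\rangle_a|\beta\rangle_j$: $[L]^{00}_{00}=au+b$, $[L]^{01}_{01}=atu+b$, $[L]^{01}_{10}=(1-t)cu$, $[L]^{10}_{01}=(1-t)d$, $[L]^{10}_{10}=eu+f$, $[L]^{11}_{11}=eu+tf$, all others $0$. Monodromy $T_a(u)=L_{aM}(u)\cdots L_{a1}(u)$, $B(u)={}_a\langle0|T_a(u)|1\rangle_a$. $|\Omega\rangle=|0\rangle^{\otimes M}$; $|x_1\cdots x_N\rangle$ has $|1\rangle$ at sites $x_j$ and $|0\rangle$ elsewhere; bras are duals. For $\sigma\in S_N$, $\mathrm{Inv}(\sigma)=\{(j,k):j<k,\ \sigma(j)>\sigma(k)\}$. $X\otimes Y$ is the Kronecker product $(X_{ik}Y)_{i,k}$. The matrices $\mathcal{A}_n,\mathcal{C}_n$ are defined by $\mathcal{A}_1=\mathrm{diag}(au_1+b,eu_1+f)$, $\mathcal{C}_1=\begin{pmatrix}0&(1-t)cu_1\\0&0\end{pmatrix}$, $\mathcal{A}_{n+1}=\mathrm{diag}(au_{n+1}+b,eu_{n+1}+f)\otimes\mathcal{A}_n+\begin{pmatrix}0&0\\(1-t)d&0\end{pmatrix}\otimes\mathcal{C}_n$,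 $\mathcal{C}_{n+1}=\begin{pmatrix}0&(1-t)cu_{n+1}\\0&0\end{pmatrix}\otimes\mathcal{A}_n+\mathrm{diag}(atu_{n+1}+b,eu_{n+1}+tf)\otimes\mathcal{C}_n$. Rows/columns of $2^N\times 2^N$ matrices are indexed by $(i_N,\dots,i_1)\in\{0,1\}^N$ consistent with this Kronecker structure (index $0$ first in each factor); $Q$ is the $2^N\times2^N$ matrix with a single entry $1$ in row $(1,\dots,1)$, column $(0,\dots,0)$, and zeros elsewhere (i.e. $Q=|1^N\rangle\langle0^N|$). *)

theory Defs
  imports "Jordan_Normal_Form.Matrix" "HOL-Combinatorics.Permutations" Complex_Main
begin

text \<open>Lel t a b c d e f u g h al be  is  [L(u)]^{g h}_{al be}: auxiliary in-state al, out-state g;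
 physical in-state be, out-state h.\<close>
definition Lel :: "complex \<Rightarrow> complex \<Rightarrow> complex \<Rightarrow> complex \<Rightarrow> complex \<Rightarrow> complex \<Rightarrow> complex
   \<Rightarrow> complex \<Rightarrow> nat \<Rightarrow> nat \<Rightarrow> nat \<Rightarrow> nat \<Rightarrow> complex" where
  "Lel t a b c d e f u g h al be =
     (if (g, h, al, be) = (0, 0, 0, 0) then a * u + b
      else if (g, h, al, be) = (0, 1, 0, 1) then a * t * u + b
      else if (g, h, al, be) = (0, 1, 1, 0) then (1 - t) * c * u
      else if (g, h, al, be) = (1, 0, 0, 1) then (1 - t) * d
      else if (g, h, al, be) = (1, 0, 1, 0) then e * u + f
      else if (g, h, al, be) = (1, 1, 1, 1) then e * u + t * f
      else 0)"

text \<open>Matrix elements of the monodromy T_a(u) = L_{a m}(u) ... L_{a 1}(u) on sites 1..m: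
 mono ... m g al dl bl = <g|_a <dl| T_a(u) |al>_a |bl>, where physical configurations
 dl, bl : nat => nat give the state (0 or 1) at each site 1..m.\<close>
fun mono :: "complex \<Rightarrow> complex \<Rightarrow> complex \<Rightarrow> complex \<Rightarrow> complex \<Rightarrow> complex \<Rightarrow> complex
   \<Rightarrow> complex \<Rightarrow> nat \<Rightarrow> nat \<Rightarrow> nat \<Rightarrow> (nat \<Rightarrow> nat) \<Rightarrow> (nat \<Rightarrow> nat) \<Rightarrow> complex" where
  "mono t a b c d e f u 0 g al dl bl = (if g = al then 1 else 0)"
| "mono t a b c d e f u (Suc m) g al dl bl =
     (\<Sum>s\<in>{0, 1}. Lel t a b c d e f u g (dl (Suc m)) s (bl (Suc m)) * mono t a b c d e f u m s al dl bl)"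

text \<open>Basis configurations of (C^2)^{\<otimes> M}: functions on sites {1..M} with values in {0,1}.\<close>
definition configs :: "nat \<Rightarrow> (nat \<Rightarrow> nat) set" where
  "configs M = PiE {1..M} (\<lambda>_. {0, 1})"

definition cfg :: "nat \<Rightarrow> nat set \<Rightarrow> (nat \<Rightarrow> nat)" where
  "cfg M X = (\<lambda>i\<in>{1..M}. if i \<in> X then 1 else 0)"

text \<open>Vectors are coefficient functions on configurations; B(u) = <0|T_a(u)|1>_a acting on them.\<close>
definition Bop :: "complex \<Rightarrow> complex \<Rightarrow> complex \<Rightarrow> complex \<Rightarrow> complex \<Rightarrow> complex \<Rightarrow> complex
   \<Rightarrow> nat \<Rightarrow> complex \<Rightarrow> ((nat \<Rightarrow> nat) \<Rightarrow> complex) \<Rightarrow> ((nat \<Rightarrow> nat) \<Rightarrow> complex)" where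
  "Bop t a b c d e f M u v = (\<lambda>dl. \<Sum>bl\<in>configs M. mono t a b c d e f u M 0 1 dl bl * v bl)"

definition Omega :: "nat \<Rightarrow> ((nat \<Rightarrow> nat) \<Rightarrow> complex)" where
  "Omega M = (\<lambda>bl. if bl = cfg M {} then 1 else 0)"

fun Bstate :: "complex \<Rightarrow> complex \<Rightarrow> complex \<Rightarrow> complex \<Rightarrow> complex \<Rightarrow> complex \<Rightarrow> complex
   \<Rightarrow> nat \<Rightarrow> (nat \<Rightarrow> complex) \<Rightarrow> nat \<Rightarrow> ((nat \<Rightarrow> nat) \<Rightarrow> complex)" where
  "Bstate t a b c d e f M u 0 = Omega M"
| "Bstate t a b c d e f M u (Suc n) = Bop t a b c d e f M (u (Suc n)) (Bstate t a b c d e f M u n)"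

definition kron :: "'a :: times mat \<Rightarrow> 'a mat \<Rightarrow> 'a mat" where
  "kron X Y = mat (dim_row X * dim_row Y) (dim_col X * dim_col Y)
     (\<lambda>(i, j). X $$ (i div dim_row Y, j div dim_col Y) * Y $$ (i mod dim_row Y, j mod dim_col Y))"

definition diag2 :: "complex \<Rightarrow> complex \<Rightarrow> complex mat" where
  "diag2 x y = mat_of_rows_list 2 [[x, 0], [0, y]]"

definition upper2 :: "complex \<Rightarrow> complex mat" where
  "upper2 x = mat_of_rows_list 2 [[0, x], [0, 0]]"

definition lower2 :: "complex \<Rightarrow> complex mat" where
  "lower2 x = mat_of_rows_list 2 [[0, 0], [x, 0]]"

text \<open>AC ... n = (A_n, C_n) for n \<ge> 1 (the value at n = 0 is irrelevant).\<close>
fun AC :: "complex \<Rightarrow> complex \<Rightarrow> complex \<Rightarrow> complex \<Rightarrow> complex \<Rightarrow> complex \<Rightarrow> complex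
   \<Rightarrow> (nat \<Rightarrow> complex) \<Rightarrow> nat \<Rightarrow> complex mat \<times> complex mat" where
  "AC t a b c d e f u 0 = (1\<^sub>m 1, 0\<^sub>m 1 1)"
| "AC t a b c d e f u (Suc 0) =
     (diag2 (a * u 1 + b) (e * u 1 + f), upper2 ((1 - t) * c * u 1))"
| "AC t a b c d e f u (Suc (Suc n)) =
     (let An = fst (AC t a b c d e f u (Suc n)); Cn = snd (AC t a b c d e f u (Suc n)) in
      (kron (diag2 (a * u (Suc (Suc n)) + b) (e * u (Suc (Suc n)) + f)) An
         + kron (lower2 ((1 - t) * d)) Cn,
       kron (upper2 ((1 - t) * c * u (Suc (Suc n)))) An
         + kron (diag2 (a * t * u (Suc (Suc n)) + b) (e * u (Suc (Suc n)) + t * f)) Cn))"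

text \<open>Row/column index (i_N,...,i_1) corresponds to the number sum_k i_k 2^(k-1), matching kron.
 Q = |1^N><0^N|.\<close>
definition Qmat :: "nat \<Rightarrow> complex mat" where
  "Qmat N = mat (2 ^ N) (2 ^ N) (\<lambda>(i, j). if i = 2 ^ N - 1 \<and> j = 0 then 1 else 0)"

definition mtrace :: "complex mat \<Rightarrow> complex" where
  "mtrace A = (\<Sum>i<dim_row A. A $$ (i, i))"

fun msum :: "nat \<Rightarrow> (nat \<Rightarrow> complex mat) \<Rightarrow> nat \<Rightarrow> complex mat" where
  "msum n C 0 = 0\<^sub>m n n"
| "msum n C (Suc k) = C (Suc k) + msum n C k"

fun mprod_desc :: "nat \<Rightarrow> (nat \<Rightarrow> complex mat) \<Rightarrow> nat \<Rightarrow> complex mat" where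
  "mprod_desc n C 0 = 1\<^sub>m n"
| "mprod_desc n C (Suc k) = C (Suc k) * mprod_desc n C k"

definition Inv :: "nat \<Rightarrow> (nat \<Rightarrow> nat) \<Rightarrow> (nat \<times> nat) set" where
  "Inv N \<sigma> = {(j, k). 1 \<le> j \<and> j < k \<and> k \<le> N \<and> \<sigma> j > \<sigma> k}"

end

theory Submission
  imports Defs
begin

text \<open>Writing each B-operator as one more Kronecker factor, B(u_N)...B(u_1)|Omega> evaluated at a
  configuration becomes the (0^N, 1^N)-entry of the ordered product over the sites M, ..., 1 of
  A_N (empty site) and C_N (occupied site x_j). Splitting C_N into the C^{(j)} and moving every
  C^{(j)} to the right through the A_N's and the later C^{(k)}'s with the exchange relations,
  each word with a repeated j vanishes because (C^{(j)})^2 = 0, and the surviving words are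
  indexed by permutations sigma; each is a scalar multiple of A_N^{M-N} C^{(N)}...C^{(1)}, the
  scalar being the Bethe-wavefunction weight of sigma, and Q turns the matrix entry into a trace.\<close>

lemma index_mult_mat_square:
  assumes "A \<in> carrier_mat n n" "B \<in> carrier_mat n n" "i < n" "j < n"
  shows "(A * B) $$ (i, j) = (\<Sum>k<n. A $$ (i, k) * B $$ (k, j))"
  using assms by (auto simp: scalar_prod_def atLeast0LessThan intro: sum.cong)

lemma smult_smult_mat: "a \<cdot>\<^sub>m (b \<cdot>\<^sub>m X) = (a * b :: 'a :: semigroup_mult) \<cdot>\<^sub>m X"
  by (rule eq_matI) (auto simp: mult.assoc)

lemma one_smult_mat: "1 \<cdot>\<^sub>m X = (X :: 'a :: monoid_mult mat)"
  by (rule eq_matI) auto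

lemma pow_mat_add:
  assumes "A \<in> carrier_mat n n"
  shows "A ^\<^sub>m p * A ^\<^sub>m q = A ^\<^sub>m (p + q)"
proof (induction q)
  case (Suc q)
  have "A ^\<^sub>m p * A ^\<^sub>m Suc q = (A ^\<^sub>m p * A ^\<^sub>m q) * A"
    using assms by (simp add: assoc_mult_mat[of _ n n _ n _ n, symmetric])
  then show ?case using Suc by simp
qed (use assms in simp)

lemma mprod_desc_carrier:
  "(\<And>s. 1 \<le> s \<Longrightarrow> s \<le> m \<Longrightarrow> F s \<in> carrier_mat n n) \<Longrightarrow> mprod_desc n F m \<in> carrier_mat n n"
  by (induction m) (auto intro: mult_carrier_mat)

lemma mprod_desc_cong:
  "(\<And>s. 1 \<le> s \<Longrightarrow> s \<le> m \<Longrightarrow> F s = G s) \<Longrightarrow> mprod_desc n F m = mprod_desc n G m"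
  by (induction m) auto

lemma mprod_desc_const: "A \<in> carrier_mat n n \<Longrightarrow> mprod_desc n (\<lambda>_. A) m = A ^\<^sub>m m"
proof (induction m)
  case (Suc m)
  have "A * A ^\<^sub>m m = A ^\<^sub>m 1 * A ^\<^sub>m m" using Suc.prems by simp
  also have "\<dots> = A ^\<^sub>m Suc m" using pow_mat_add[OF Suc.prems, of 1 m] by simp
  finally show ?case using Suc by simp
qed simp

lemma mprod_desc_add:
  assumes F: "\<And>s. F s \<in> carrier_mat n n"
  shows "mprod_desc n F (m + l) = mprod_desc n (\<lambda>i. F (m + i)) l * mprod_desc n F m"
proof (induction l)
  case (Suc l)
  have "mprod_desc n (\<lambda>i. F (m + i)) l \<in> carrier_mat n n" "mprod_desc n F m \<in> carrier_mat n n"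
    by (auto intro: mprod_desc_carrier F)
  then show ?case using Suc assoc_mult_mat[OF F] by simp
qed (use mprod_desc_carrier[of m F n] F in simp)

definition msum_set :: "nat \<Rightarrow> ('b \<Rightarrow> 'a :: comm_monoid_add mat) \<Rightarrow> 'b set \<Rightarrow> 'a mat" where
  "msum_set n F S = mat n n (\<lambda>(i, j). \<Sum>x\<in>S. F x $$ (i, j))"

lemma msum_set_dim [simp]: "dim_row (msum_set n F S) = n" "dim_col (msum_set n F S) = n"
  by (simp_all add: msum_set_def)

lemma msum_set_carrier [simp]: "msum_set n F S \<in> carrier_mat n n"
  by (simp add: msum_set_def)

lemma index_msum_set: "i < n \<Longrightarrow> j < n \<Longrightarrow> msum_set n F S $$ (i, j) = (\<Sum>x\<in>S. F x $$ (i, j))"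
  by (simp add: msum_set_def)

lemma msum_set_cong: "(\<And>x. x \<in> S \<Longrightarrow> F x = G x) \<Longrightarrow> msum_set n F S = msum_set n G S"
  by (simp add: msum_set_def)

lemma msum_set_singleton: "F x \<in> carrier_mat n n \<Longrightarrow> msum_set n F {x} = F x"
  by (rule eq_matI) (auto simp: index_msum_set)

lemma msum_set_if_zero:
  assumes "finite T"
  shows "msum_set n (\<lambda>x. if x \<in> S then 0\<^sub>m n n else F x) T = msum_set n F (T - S)"
proof (rule eq_matI)
  fix i j assume "i < dim_row (msum_set n F (T - S))" "j < dim_col (msum_set n F (T - S))"
  then have ij: "i < n" "j < n" by auto
  have "(\<Sum>x\<in>T. (if x \<in> S then 0\<^sub>m n n else F x) $$ (i, j)) = (\<Sum>x\<in>T. if x \<in> S then 0 else F x $$ (i, j))"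
    using ij by (intro sum.cong) auto
  also have "\<dots> = (\<Sum>x\<in>T - S. F x $$ (i, j))"
    using assms by (simp add: sum.If_cases Diff_eq)
  finally show "msum_set n (\<lambda>x. if x \<in> S then 0\<^sub>m n n else F x) T $$ (i, j) = msum_set n F (T - S) $$ (i, j)"
    using ij by (simp add: index_msum_set)
qed simp_all

lemma msum_eq_msum_set:
  "(\<And>j. j \<in> {1..m} \<Longrightarrow> F j \<in> carrier_mat n n) \<Longrightarrow> msum n F m = msum_set n F {1..m}"
proof (induction m)
  case (Suc m)
  then have "F (Suc m) \<in> carrier_mat n n" "msum n F m = msum_set n F {1..m}" by auto
  then show ?case
    by (intro eq_matI) (auto simp: index_msum_set sum.cl_ivl_Suc add.commute)
qed (auto intro: eq_matI simp: index_msum_set)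

lemma mult_msum_set:
  assumes B: "B \<in> carrier_mat n n" and F: "\<And>x. x \<in> S \<Longrightarrow> F x \<in> carrier_mat n n"
  shows "B * msum_set n F S = msum_set n (\<lambda>x. B * F x) S"
proof (rule eq_matI)
  fix i j assume "i < dim_row (msum_set n (\<lambda>x. B * F x) S)" "j < dim_col (msum_set n (\<lambda>x. B * F x) S)"
  then have ij: "i < n" "j < n" by auto
  have "(B * msum_set n F S) $$ (i, j) = (\<Sum>l<n. B $$ (i, l) * (\<Sum>x\<in>S. F x $$ (l, j)))"
    using index_mult_mat_square[OF B msum_set_carrier ij] by (simp add: index_msum_set ij)
  also have "\<dots> = (\<Sum>x\<in>S. (B * F x) $$ (i, j))"
    by (simp add: sum_distrib_left sum.swap[of _ "{..<n}"] index_mult_mat_square[OF B F ij])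
  finally show "(B * msum_set n F S) $$ (i, j) = msum_set n (\<lambda>x. B * F x) S $$ (i, j)"
    by (simp add: index_msum_set ij)
qed (use B in auto)

lemma msum_set_mult:
  assumes B: "B \<in> carrier_mat n n" and F: "\<And>x. x \<in> S \<Longrightarrow> F x \<in> carrier_mat n n"
  shows "msum_set n F S * B = msum_set n (\<lambda>x. F x * B) S"
proof (rule eq_matI)
  fix i j assume "i < dim_row (msum_set n (\<lambda>x. F x * B) S)" "j < dim_col (msum_set n (\<lambda>x. F x * B) S)"
  then have ij: "i < n" "j < n" by auto
  have "(msum_set n F S * B) $$ (i, j) = (\<Sum>l<n. (\<Sum>x\<in>S. F x $$ (i, l)) * B $$ (l, j))"
    using index_mult_mat_square[OF msum_set_carrier B ij] by (simp add: index_msum_set ij)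
  also have "\<dots> = (\<Sum>x\<in>S. (F x * B) $$ (i, j))"
    by (simp add: sum_distrib_right sum.swap[of _ "{..<n}"] index_mult_mat_square[OF F B ij])
  finally show "(msum_set n F S * B) $$ (i, j) = msum_set n (\<lambda>x. F x * B) S $$ (i, j)"
    by (simp add: index_msum_set ij)
qed (use B in auto)

lemma smult_msum_set:
  fixes F :: "'b \<Rightarrow> 'a :: semiring_0 mat"
  shows "(\<And>x. x \<in> S \<Longrightarrow> F x \<in> carrier_mat n n) \<Longrightarrow>
   k \<cdot>\<^sub>m msum_set n F S = msum_set n (\<lambda>x. k \<cdot>\<^sub>m F x) S"
proof (rule eq_matI)
  fix i j assume F: "\<And>x. x \<in> S \<Longrightarrow> F x \<in> carrier_mat n n"
    and ij: "i < dim_row (msum_set n (\<lambda>x. k \<cdot>\<^sub>m F x) S)" "j < dim_col (msum_set n (\<lambda>x. k \<cdot>\<^sub>m F x) S)"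
  then have "x \<in> S \<Longrightarrow> (k \<cdot>\<^sub>m F x) $$ (i, j) = k * F x $$ (i, j)" for x
    by (metis carrier_matD index_smult_mat(1) msum_set_dim)
  then show "(k \<cdot>\<^sub>m msum_set n F S) $$ (i, j) = msum_set n (\<lambda>x. k \<cdot>\<^sub>m F x) S $$ (i, j)"
    using ij by (simp add: index_msum_set sum_distrib_left)
qed auto

lemma kron_dim [simp]:
  "dim_row (kron X Y) = dim_row X * dim_row Y" "dim_col (kron X Y) = dim_col X * dim_col Y"
  by (auto simp: kron_def)

lemma index_kron:
  "i < dim_row X * dim_row Y \<Longrightarrow> j < dim_col X * dim_col Y \<Longrightarrow>
   kron X Y $$ (i, j) = X $$ (i div dim_row Y, j div dim_col Y) * Y $$ (i mod dim_row Y, j mod dim_col Y)"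
  by (simp add: kron_def)

lemma kron_carrier_mat:
  "X \<in> carrier_mat p q \<Longrightarrow> Y \<in> carrier_mat r s \<Longrightarrow> kron X Y \<in> carrier_mat (p * r) (q * s)"
  by (intro carrier_matI) (simp_all add: carrier_matD)

lemma sum_lessThan_mult:
  "(\<Sum>k < m * n. g k) = (\<Sum>k1 < m. \<Sum>k2 < n. g (k1 * n + k2 :: nat))"
proof -
  have "(\<Sum>k2 < n. g (k1 * n + k2)) = sum g {k1 * n ..< k1 * n + n}" for k1
    using sum.shift_bounds_nat_ivl[of g 0 "k1 * n" n] by (simp add: atLeast0LessThan add.commute)
  then show ?thesis by (simp only: sum.nat_group)
qed

lemma kron_mult:
  fixes P P' :: "'a :: comm_ring_1 mat"
  assumes P: "P \<in> carrier_mat m m" "P' \<in> carrier_mat m m"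
    and Y: "Y \<in> carrier_mat n n" "Y' \<in> carrier_mat n n"
  shows "kron P Y * kron P' Y' = kron (P * P') (Y * Y')"
proof (rule eq_matI)
  fix i j assume "i < dim_row (kron (P * P') (Y * Y'))" "j < dim_col (kron (P * P') (Y * Y'))"
  then have ij: "i < m * n" "j < m * n" using P Y by auto
  then have n: "0 < n" by (cases n) auto
  have ij': "i div n < m" "j div n < m" "i mod n < n" "j mod n < n"
    using ij n by (auto simp: less_mult_imp_div_less)
  have idx: "(k1 * n + k2) div n = k1" "(k1 * n + k2) mod n = k2" "k1 * n + k2 < m * n"
    if "k1 < m" "k2 < n" for k1 k2
  proof -
    have "k1 * n + k2 < (k1 + 1) * n" using that by simp
    also have "\<dots> \<le> m * n" using that by (intro mult_right_mono) auto
    finally show "k1 * n + k2 < m * n" .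
  qed (use that in auto)
  have KP: "kron P Y \<in> carrier_mat (m * n) (m * n)" "kron P' Y' \<in> carrier_mat (m * n) (m * n)"
    using P Y by (auto intro: kron_carrier_mat)
  have entry: "kron P Y $$ (i, k1 * n + k2) * kron P' Y' $$ (k1 * n + k2, j)
      = (P $$ (i div n, k1) * P' $$ (k1, j div n)) * (Y $$ (i mod n, k2) * Y' $$ (k2, j mod n))"
    if "k1 < m" "k2 < n" for k1 k2
  proof -
    have "kron P Y $$ (i, k1 * n + k2) = P $$ (i div n, k1) * Y $$ (i mod n, k2)"
      using index_kron[of i P Y "k1 * n + k2"] P Y ij idx[OF that] by simp
    moreover have "kron P' Y' $$ (k1 * n + k2, j) = P' $$ (k1, j div n) * Y' $$ (k2, j mod n)"
      using index_kron[of "k1 * n + k2" P' Y' j] P Y ij idx[OF that] by simp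
    ultimately show ?thesis by (simp add: ac_simps)
  qed
  have "(kron P Y * kron P' Y') $$ (i, j)
      = (\<Sum>k1<m. \<Sum>k2<n. kron P Y $$ (i, k1 * n + k2) * kron P' Y' $$ (k1 * n + k2, j))"
    unfolding index_mult_mat_square[OF KP ij] by (rule sum_lessThan_mult)
  also have "\<dots> = (\<Sum>k1<m. \<Sum>k2<n. (P $$ (i div n, k1) * P' $$ (k1, j div n))
      * (Y $$ (i mod n, k2) * Y' $$ (k2, j mod n)))"
    by (intro sum.cong refl) (simp add: entry)
  also have "\<dots> = (P * P') $$ (i div n, j div n) * (Y * Y') $$ (i mod n, j mod n)"
    unfolding index_mult_mat_square[OF P ij'(1,2)] index_mult_mat_square[OF Y ij'(3,4)]
    by (rule sum_product[symmetric])
  also have "\<dots> = kron (P * P') (Y * Y') $$ (i, j)"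
    using index_kron[of i "P * P'" "Y * Y'" j] P Y ij by simp
  finally show "(kron P Y * kron P' Y') $$ (i, j) = kron (P * P') (Y * Y') $$ (i, j)" .
qed (use P Y in simp_all)

lemma kron_one: "kron (1\<^sub>m p) (1\<^sub>m q) = (1\<^sub>m (p * q) :: 'a :: semiring_1 mat)"
proof (rule eq_matI)
  fix i j assume ij: "i < dim_row (1\<^sub>m (p * q) :: 'a mat)" "j < dim_col (1\<^sub>m (p * q) :: 'a mat)"
  then have "q > 0" by (cases q) auto
  moreover have "i div q < p" "j div q < p"
    using ij by (simp_all add: less_mult_imp_div_less)
  moreover have "(i = j) = (i div q = j div q \<and> i mod q = j mod q)"
    by (metis div_mult_mod_eq)
  ultimately show "kron (1\<^sub>m p) (1\<^sub>m q) $$ (i, j) = (1\<^sub>m (p * q) :: 'a mat) $$ (i, j)"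
    using ij by (simp add: index_kron)
qed simp_all

lemma configs_0: "configs 0 = {\<lambda>_. undefined}"
  by (simp add: configs_def)

lemma configs_Suc: "configs (Suc m) = (\<lambda>(h, bl). bl(Suc m := h)) ` ({0, 1} \<times> configs m)"
proof -
  have "{1..Suc m} = insert (Suc m) {1..m}" by auto
  then show ?thesis by (simp add: configs_def PiE_insert_eq)
qed

lemma sum_configs_Suc:
  "(\<Sum>bl\<in>configs (Suc m). g bl) = (\<Sum>bl\<in>configs m. g (bl(Suc m := 0)) + g (bl(Suc m := 1)))"
proof -
  have inj: "inj_on (\<lambda>(h, bl). bl(Suc m := h)) ({0, 1} \<times> configs m)"
    unfolding configs_def by (rule inj_combinator[where T="\<lambda>_. {0, 1}", simplified]) simp
  have "(\<Sum>bl\<in>configs (Suc m). g bl) = (\<Sum>(h, bl)\<in>{0, 1} \<times> configs m. g (bl(Suc m := h)))"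
    unfolding configs_Suc by (subst sum.reindex[OF inj]) (simp add: split_def)
  also have "\<dots> = (\<Sum>bl\<in>configs m. g (bl(Suc m := 0)) + g (bl(Suc m := 1)))"
    by (simp add: sum.cartesian_product[symmetric] sum.distrib)
  finally show ?thesis .
qed

lemma msum_set_configs_Suc:
  "msum_set n (\<lambda>bl. G (bl(Suc m := 0)) + G (bl(Suc m := 1))) (configs m) = msum_set n G (configs (Suc m))"
  if "\<And>bl. G bl \<in> carrier_mat n n"
  by (intro eq_matI) (auto simp: index_msum_set sum_configs_Suc carrier_matD[OF that] intro!: sum.cong)

lemma cfg_in_configs: "cfg M X \<in> configs M"
  by (auto simp: cfg_def configs_def)

lemma cfg_empty_iff: "dl \<in> configs M \<Longrightarrow> dl = cfg M {} \<longleftrightarrow> (\<forall>s\<in>{1..M}. dl s = 0)"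
  by (auto simp: cfg_def configs_def PiE_def extensional_def)

lemma mprod_desc_kron_expand:
  fixes P :: "nat \<Rightarrow> nat \<Rightarrow> complex mat" and Y :: "nat \<Rightarrow> complex mat"
  assumes P: "\<And>s h. P s h \<in> carrier_mat 2 2" and Y: "\<And>h. Y h \<in> carrier_mat n n"
  shows "mprod_desc (2 * n) (\<lambda>s. kron (P s 0) (Y 0) + kron (P s 1) (Y 1)) m
    = msum_set (2 * n)
        (\<lambda>bl. kron (mprod_desc 2 (\<lambda>s. P s (bl s)) m) (mprod_desc n (\<lambda>s. Y (bl s)) m)) (configs m)"
proof (induction m)
  case 0
  show ?case by (simp add: configs_0 kron_one msum_set_singleton)
next
  case (Suc m)
  define PP where "PP bl = mprod_desc 2 (\<lambda>s. P s (bl s)) m" for bl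
  define YY where "YY bl = mprod_desc n (\<lambda>s. Y (bl s)) m" for bl
  define K where "K bl = kron (mprod_desc 2 (\<lambda>s. P s (bl s)) (Suc m)) (mprod_desc n (\<lambda>s. Y (bl s)) (Suc m))" for bl
  have PPc: "PP bl \<in> carrier_mat 2 2" and YYc: "YY bl \<in> carrier_mat n n" for bl
    unfolding PP_def YY_def by (auto intro!: mprod_desc_carrier P Y)
  have Kc: "K bl \<in> carrier_mat (2 * n) (2 * n)" for bl
    unfolding K_def by (intro kron_carrier_mat mprod_desc_carrier P Y)
  have K_upd: "K (bl(Suc m := h)) = kron (P (Suc m) h * PP bl) (Y h * YY bl)" for bl h
  proof -
    have "mprod_desc 2 (\<lambda>s. P s ((bl(Suc m := h)) s)) m = PP bl"
      "mprod_desc n (\<lambda>s. Y ((bl(Suc m := h)) s)) m = YY bl"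
      unfolding PP_def YY_def by (auto intro: mprod_desc_cong)
    then show ?thesis by (simp add: K_def)
  qed
  have kc: "kron (P s h) (Y h') \<in> carrier_mat (2 * n) (2 * n)" for s h h'
    by (intro kron_carrier_mat P Y)
  have "mprod_desc (2 * n) (\<lambda>s. kron (P s 0) (Y 0) + kron (P s 1) (Y 1)) (Suc m)
      = (kron (P (Suc m) 0) (Y 0) + kron (P (Suc m) 1) (Y 1)) * msum_set (2 * n) (\<lambda>bl. kron (PP bl) (YY bl)) (configs m)"
    using Suc by (simp add: PP_def YY_def)
  also have "\<dots> = msum_set (2 * n) (\<lambda>bl. K (bl(Suc m := 0)) + K (bl(Suc m := 1))) (configs m)"
  proof -
    have "(kron (P (Suc m) 0) (Y 0) + kron (P (Suc m) 1) (Y 1)) * kron (PP bl) (YY bl)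
        = K (bl(Suc m := 0)) + K (bl(Suc m := 1))" for bl
      using add_mult_distrib_mat[OF kc kc kron_carrier_mat[OF PPc YYc]]
      by (simp add: K_upd kron_mult[OF P PPc Y YYc])
    then show ?thesis
      by (subst mult_msum_set) (auto intro: add_carrier_mat kc kron_carrier_mat PPc YYc)
  qed
  also have "\<dots> = msum_set (2 * n) K (configs (Suc m))"
    by (rule msum_set_configs_Suc[OF Kc])
  finally show ?case unfolding K_def .
qed

subsection \<open>The monodromy matrix as an ordered product\<close>

definition Lmat :: "complex \<Rightarrow> complex \<Rightarrow> complex \<Rightarrow> complex \<Rightarrow> complex \<Rightarrow> complex \<Rightarrow> complex
   \<Rightarrow> complex \<Rightarrow> nat \<Rightarrow> nat \<Rightarrow> complex mat" where
  "Lmat t a b c d e f u h h' = mat 2 2 (\<lambda>(g, al). Lel t a b c d e f u g h al h')"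

lemma Lmat_carrier [simp]: "Lmat t a b c d e f u h h' \<in> carrier_mat 2 2"
  by (simp add: Lmat_def)

lemma mono_eq_mprod_Lmat:
  "g < 2 \<Longrightarrow> al < 2 \<Longrightarrow> mono t a b c d e f u m g al dl bl
     = mprod_desc 2 (\<lambda>s. Lmat t a b c d e f u (dl s) (bl s)) m $$ (g, al)"
proof (induction m arbitrary: g)
  case (Suc m)
  have "mprod_desc 2 (\<lambda>s. Lmat t a b c d e f u (dl s) (bl s)) m \<in> carrier_mat 2 2"
    by (rule mprod_desc_carrier) simp
  then show ?case
    using Suc by (simp add: scalar_prod_def numeral_2_eq_2 Lmat_def)
qed simp

lemma less_2_iff: "(i :: nat) < 2 \<longleftrightarrow> i = 0 \<or> i = 1"
  by auto

lemma AC_Suc: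
  "AC t a b c d e f u (Suc n) =
   (kron (Lmat t a b c d e f (u (Suc n)) 0 0) (fst (AC t a b c d e f u n))
      + kron (Lmat t a b c d e f (u (Suc n)) 0 1) (snd (AC t a b c d e f u n)),
    kron (Lmat t a b c d e f (u (Suc n)) 1 0) (fst (AC t a b c d e f u n))
      + kron (Lmat t a b c d e f (u (Suc n)) 1 1) (snd (AC t a b c d e f u n)))"
proof -
  have L: "diag2 (a * v + b) (e * v + f) = Lmat t a b c d e f v 0 0"
    "lower2 ((1 - t) * d) = Lmat t a b c d e f v 0 1"
    "upper2 ((1 - t) * c * v) = Lmat t a b c d e f v 1 0"
    "diag2 (a * t * v + b) (e * v + t * f) = Lmat t a b c d e f v 1 1" for v
    by (auto intro!: eq_matI simp: diag2_def lower2_def upper2_def mat_of_rows_list_def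
        Lmat_def Lel_def less_2_iff)
  show ?thesis
  proof (cases n)
    case 0
    have "kron X (1\<^sub>m 1) + kron Z (0\<^sub>m 1 1) = X"
      if "X \<in> carrier_mat 2 2" "Z \<in> carrier_mat 2 2" for X Z :: "complex mat"
      using that by (intro eq_matI) (auto simp: index_kron)
    moreover have "AC t a b c d e f u (Suc 0)
        = (Lmat t a b c d e f (u (Suc 0)) 0 0, Lmat t a b c d e f (u (Suc 0)) 1 0)"
      by (simp add: L)
    ultimately show ?thesis by (simp add: 0)
  next
    case (Suc k)
    then show ?thesis by (simp add: Let_def L[of "u (Suc (Suc k))"] del: AC.simps(1))
  qed
qed

definition AC_sel :: "complex \<Rightarrow> complex \<Rightarrow> complex \<Rightarrow> complex \<Rightarrow> complex \<Rightarrow> complex \<Rightarrow> complex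
   \<Rightarrow> (nat \<Rightarrow> complex) \<Rightarrow> nat \<Rightarrow> nat \<Rightarrow> complex mat" where
  "AC_sel t a b c d e f u n h = (if h = 0 then fst (AC t a b c d e f u n) else snd (AC t a b c d e f u n))"

lemma AC_sel_carrier: "AC_sel t a b c d e f u n h \<in> carrier_mat (2 ^ n) (2 ^ n)"
proof -
  have "fst (AC t a b c d e f u n) \<in> carrier_mat (2 ^ n) (2 ^ n) \<and> snd (AC t a b c d e f u n) \<in> carrier_mat (2 ^ n) (2 ^ n)"
    by (induction n) (auto simp: AC_Suc intro!: add_carrier_mat kron_carrier_mat)
  then show ?thesis by (simp add: AC_sel_def)
qed

lemma AC_sel_Suc:
  "h \<in> {0, 1} \<Longrightarrow> AC_sel t a b c d e f u (Suc n) h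
     = kron (Lmat t a b c d e f (u (Suc n)) h 0) (AC_sel t a b c d e f u n 0)
       + kron (Lmat t a b c d e f (u (Suc n)) h 1) (AC_sel t a b c d e f u n 1)"
  by (auto simp: AC_sel_def AC_Suc)

lemma mprod_desc_AC_sel_0:
  "mprod_desc 1 (\<lambda>s. AC_sel t a b c d e f u 0 (dl s)) m $$ (0, 0) = (if \<forall>s\<in>{1..m}. dl s = 0 then 1 else 0)"
proof (induction m)
  case (Suc m)
  let ?X = "\<lambda>s. AC_sel t a b c d e f u 0 (dl s)"
  have c: "mprod_desc 1 ?X m \<in> carrier_mat 1 1" "?X (Suc m) \<in> carrier_mat 1 1"
    using AC_sel_carrier[of t a b c d e f u 0] by (auto intro: mprod_desc_carrier)
  have X: "?X (Suc m) $$ (0, 0) = (if dl (Suc m) = 0 then 1 else 0)"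
    by (simp add: AC_sel_def)
  have "mprod_desc 1 ?X (Suc m) $$ (0, 0) = ?X (Suc m) $$ (0, 0) * mprod_desc 1 ?X m $$ (0, 0)"
    using index_mult_mat_square[OF c(2,1), of 0 0] by simp
  moreover have "(\<forall>s\<in>{1..Suc m}. dl s = 0) = ((\<forall>s\<in>{1..m}. dl s = 0) \<and> dl (Suc m) = 0)"
    by (auto simp: le_Suc_eq)
  ultimately show ?case
    unfolding X Suc.IH by simp
qed simp

lemma Bstate_eq_mprod_AC_sel:
  "dl \<in> configs M \<Longrightarrow> Bstate t a b c d e f M u n dl
     = mprod_desc (2 ^ n) (\<lambda>s. AC_sel t a b c d e f u n (dl s)) M $$ (0, 2 ^ n - 1)"
proof (induction n arbitrary: dl)
  case 0
  then show ?case
    using mprod_desc_AC_sel_0[of t a b c d e f u dl M] by (simp add: Omega_def cfg_empty_iff)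
next
  case (Suc n)
  let ?P = "\<lambda>s h. Lmat t a b c d e f (u (Suc n)) (dl s) h"
  let ?Y = "AC_sel t a b c d e f u n"
  have dl: "dl s \<in> {0, 1}" if "s \<in> {1..M}" for s
    using Suc.prems that by (auto simp: configs_def)
  have "mprod_desc (2 ^ Suc n) (\<lambda>s. AC_sel t a b c d e f u (Suc n) (dl s)) M
      = mprod_desc (2 * 2 ^ n) (\<lambda>s. kron (?P s 0) (?Y 0) + kron (?P s 1) (?Y 1)) M"
    unfolding power_Suc by (rule mprod_desc_cong, rule AC_sel_Suc, rule dl) simp
  also have "\<dots> = msum_set (2 * 2 ^ n)
      (\<lambda>bl. kron (mprod_desc 2 (\<lambda>s. ?P s (bl s)) M) (mprod_desc (2 ^ n) (\<lambda>s. ?Y (bl s)) M)) (configs M)"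
    by (rule mprod_desc_kron_expand[OF Lmat_carrier AC_sel_carrier])
  finally have expand: "mprod_desc (2 ^ Suc n) (\<lambda>s. AC_sel t a b c d e f u (Suc n) (dl s)) M = \<dots>" .
  txt \<open>Row 0 and column 2^(n+1) - 1 are row 0 and column 1 of the auxiliary factor, i.e. the
    entry <0|T(u)|1> defining B(u).\<close>
  have pos: "(0 :: nat) < 2 ^ n" by simp
  have split: "2 * 2 ^ n - 1 = (2 ^ n - 1) + 1 * (2 ^ n :: nat)" and lt: "(2 ^ n - 1 :: nat) < 2 ^ n"
    using pos by linarith+
  have last: "(2 * 2 ^ n - 1) div 2 ^ n = (1 :: nat)" "(2 * 2 ^ n - 1) mod 2 ^ n = 2 ^ n - (1 :: nat)"
    unfolding split div_mult_self1[OF pos[THEN less_imp_neq, symmetric]] mod_mult_self1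
    using lt by simp_all
  show ?case
    unfolding expand using AC_sel_carrier[of t a b c d e f u n] last
    by (simp add: index_msum_set index_kron mprod_desc_carrier Bop_def mono_eq_mprod_Lmat Suc.IH
        carrier_matD[OF mprod_desc_carrier])
qed

lemma Bstate_cfg:
  "Bstate t a b c d e f M u n (cfg M X) = mprod_desc (2 ^ n)
     (\<lambda>s. if s \<in> X then snd (AC t a b c d e f u n) else fst (AC t a b c d e f u n)) M $$ (0, 2 ^ n - 1)"
proof -
  have "mprod_desc (2 ^ n) (\<lambda>s. AC_sel t a b c d e f u n (cfg M X s)) M
      = mprod_desc (2 ^ n) (\<lambda>s. if s \<in> X then snd (AC t a b c d e f u n) else fst (AC t a b c d e f u n)) M"
    by (intro mprod_desc_cong) (simp add: cfg_def AC_sel_def)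
  then show ?thesis using Bstate_eq_mprod_AC_sel[OF cfg_in_configs] by simp
qed

subsection \<open>Partial injections\<close>

definition injs :: "nat \<Rightarrow> nat \<Rightarrow> (nat \<Rightarrow> nat) set" where
  "injs N p = {\<sigma>. inj_on \<sigma> {1..p} \<and> \<sigma> ` {1..p} \<subseteq> {1..N} \<and> (\<forall>i. i \<notin> {1..p} \<longrightarrow> \<sigma> i = i)}"

lemma injs_0: "injs N 0 = {id}"
  by (auto simp: injs_def)

lemma finite_injs: "finite (injs N p)"
proof -
  have "injs N p \<subseteq> (\<lambda>f i. if i \<in> {1..p} then f i else i) ` PiE {1..p} (\<lambda>_. {1..N})"
  proof
    fix \<sigma> assume \<sigma>: "\<sigma> \<in> injs N p"
    then have "\<sigma> = (\<lambda>i. if i \<in> {1..p} then restrict \<sigma> {1..p} i else i)"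
      "restrict \<sigma> {1..p} \<in> PiE {1..p} (\<lambda>_. {1..N})"
      by (auto simp: injs_def)
    then show "\<sigma> \<in> (\<lambda>f i. if i \<in> {1..p} then f i else i) ` PiE {1..p} (\<lambda>_. {1..N})"
      by blast
  qed
  then show ?thesis by (rule finite_subset) (simp add: finite_PiE)
qed

lemma image_upd_Suc: "\<sigma>(Suc p := j) ` {1..Suc p} = insert j (\<sigma> ` {1..p})"
proof -
  have "{1..Suc p} = insert (Suc p) {1..p}" "\<sigma>(Suc p := j) ` {1..p} = \<sigma> ` {1..p}" by auto
  then show ?thesis by (simp only: image_insert) simp
qed

lemma upd_Suc_in_injs_iff:
  "\<sigma> \<in> injs N p \<Longrightarrow> \<sigma>(Suc p := j) \<in> injs N (Suc p) \<longleftrightarrow> j \<in> {1..N} - \<sigma> ` {1..p}"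
proof -
  assume \<sigma>: "\<sigma> \<in> injs N p"
  have "inj_on (\<sigma>(Suc p := j)) {1..p} = inj_on \<sigma> {1..p}" by (rule inj_on_cong) auto
  moreover have "{1..Suc p} = insert (Suc p) {1..p}" "\<sigma>(Suc p := j) ` {1..p} = \<sigma> ` {1..p}" by auto
  ultimately show ?thesis using \<sigma> by (auto simp: injs_def inj_on_insert)
qed

lemma injs_Suc:
  "injs N (Suc p) = (\<lambda>(\<sigma>, j). \<sigma>(Suc p := j)) ` (SIGMA \<sigma>:injs N p. {1..N} - \<sigma> ` {1..p})"
proof (intro equalityI subsetI)
  fix \<sigma>' assume \<sigma>': "\<sigma>' \<in> injs N (Suc p)"
  define \<sigma> where "\<sigma> = \<sigma>'(Suc p := Suc p)"
  have "inj_on \<sigma> {1..p}"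
    using \<sigma>' inj_on_cong[of "{1..p}" \<sigma> \<sigma>'] by (auto simp: injs_def \<sigma>_def intro: inj_on_subset)
  then have \<sigma>: "\<sigma> \<in> injs N p"
    using \<sigma>' by (auto simp: injs_def \<sigma>_def)
  have "\<sigma>(Suc p := \<sigma>' (Suc p)) = \<sigma>'" by (simp add: \<sigma>_def)
  then have "\<sigma>' (Suc p) \<in> {1..N} - \<sigma> ` {1..p}"
    using upd_Suc_in_injs_iff[OF \<sigma>, of "\<sigma>' (Suc p)"] \<sigma>' by simp
  then show "\<sigma>' \<in> (\<lambda>(\<sigma>, j). \<sigma>(Suc p := j)) ` (SIGMA \<sigma>:injs N p. {1..N} - \<sigma> ` {1..p})"
    using \<sigma> \<open>\<sigma>(Suc p := \<sigma>' (Suc p)) = \<sigma>'\<close>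
    by (intro image_eqI[where x = "(\<sigma>, \<sigma>' (Suc p))"]) auto
qed (auto simp: upd_Suc_in_injs_iff)

lemma inj_on_upd_Suc: "inj_on (\<lambda>(\<sigma>, j). \<sigma>(Suc p := j)) (SIGMA \<sigma>:injs N p. {1..N} - \<sigma> ` {1..p})"
proof (rule inj_onI, clarsimp)
  fix \<sigma>1 j1 \<sigma>2 j2 assume \<sigma>: "\<sigma>1 \<in> injs N p" "\<sigma>2 \<in> injs N p" and e: "\<sigma>1(Suc p := j1) = \<sigma>2(Suc p := j2)"
  have "\<sigma>1 i = \<sigma>2 i" for i
    using fun_cong[OF e, of i] \<sigma> by (cases "i = Suc p") (auto simp: injs_def)
  then show "\<sigma>1 = \<sigma>2 \<and> j1 = j2" using fun_cong[OF e, of "Suc p"] by auto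
qed

lemma sum_injs_Suc:
  "(\<Sum>\<sigma>\<in>injs N p. \<Sum>j\<in>{1..N} - \<sigma> ` {1..p}. H (\<sigma>(Suc p := j))) = (\<Sum>\<sigma>\<in>injs N (Suc p). H \<sigma>)"
proof -
  have "(\<Sum>\<sigma>\<in>injs N (Suc p). H \<sigma>)
      = (\<Sum>(\<sigma>, j)\<in>(SIGMA \<sigma>:injs N p. {1..N} - \<sigma> ` {1..p}). H (\<sigma>(Suc p := j)))"
    unfolding injs_Suc by (subst sum.reindex[OF inj_on_upd_Suc]) (simp add: split_def)
  then show ?thesis by (simp add: sum.Sigma finite_injs)
qed

lemma msum_set_injs_Suc:
  "msum_set n (\<lambda>\<sigma>. msum_set n (\<lambda>j. F (\<sigma>(Suc p := j))) ({1..N} - \<sigma> ` {1..p})) (injs N p)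
    = msum_set n F (injs N (Suc p))"
proof (rule eq_matI)
  fix i j assume "i < dim_row (msum_set n F (injs N (Suc p)))" "j < dim_col (msum_set n F (injs N (Suc p)))"
  then show "msum_set n (\<lambda>\<sigma>. msum_set n (\<lambda>j. F (\<sigma>(Suc p := j))) ({1..N} - \<sigma> ` {1..p})) (injs N p) $$ (i, j)
    = msum_set n F (injs N (Suc p)) $$ (i, j)"
    using sum_injs_Suc[where H = "\<lambda>\<sigma>. F \<sigma> $$ (i, j)" and N = N and p = p] by (simp add: index_msum_set)
qed simp_all

lemma injs_eq_permutes: "injs N N = {\<sigma>. \<sigma> permutes {1..N}}"
proof (intro equalityI subsetI CollectI)
  fix \<sigma> assume \<sigma>: "\<sigma> \<in> injs N N"
  then have "\<sigma> ` {1..N} = {1..N}" by (intro endo_inj_surj) (auto simp: injs_def)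
  with \<sigma> show "\<sigma> permutes {1..N}" by (auto intro: bij_imp_permutes simp: bij_betw_def injs_def)
next
  fix \<sigma> assume "\<sigma> \<in> {\<sigma>. \<sigma> permutes {1..N}}"
  then show "\<sigma> \<in> injs N N"
    by (auto simp: injs_def permutes_inj_on permutes_image permutes_not_in)
qed

subsection \<open>Weights of partial injections\<close>

lemma finite_Inv: "finite (Inv p \<sigma>)"
  by (rule finite_subset[of _ "{1..p} \<times> {1..p}"]) (auto simp: Inv_def)

lemma prod_Inv_upd_Suc:
  assumes inj: "inj_on \<sigma> {1..p}"
  shows "(\<Prod>(a, b)\<in>Inv (Suc p) (\<sigma>(Suc p := j)). g ((\<sigma>(Suc p := j)) b) ((\<sigma>(Suc p := j)) a))
    = (\<Prod>(a, b)\<in>Inv p \<sigma>. g (\<sigma> b) (\<sigma> a)) * (\<Prod>k\<in>{k\<in>\<sigma> ` {1..p}. j < k}. g j k)"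
proof -
  let ?\<sigma>' = "\<sigma>(Suc p := j)"
  let ?new = "(\<lambda>q. (q, Suc p)) ` {q\<in>{1..p}. j < \<sigma> q}"
  have Inv: "Inv (Suc p) ?\<sigma>' = Inv p \<sigma> \<union> ?new" and disj: "Inv p \<sigma> \<inter> ?new = {}"
    by (auto simp: Inv_def le_Suc_eq)
  have "(\<Prod>(a, b)\<in>Inv p \<sigma>. g (?\<sigma>' b) (?\<sigma>' a)) = (\<Prod>(a, b)\<in>Inv p \<sigma>. g (\<sigma> b) (\<sigma> a))"
    by (rule prod.cong) (auto simp: Inv_def)
  moreover have "(\<Prod>(a, b)\<in>?new. g (?\<sigma>' b) (?\<sigma>' a)) = (\<Prod>q\<in>{q\<in>{1..p}. j < \<sigma> q}. g j (\<sigma> q))"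
    by (subst prod.reindex) (auto simp: inj_on_def)
  moreover have "\<dots> = (\<Prod>k\<in>\<sigma> ` {q\<in>{1..p}. j < \<sigma> q}. g j k)"
    by (rule prod.reindex[symmetric, unfolded comp_def]) (rule inj_on_subset[OF inj], auto)
  moreover have "\<sigma> ` {q\<in>{1..p}. j < \<sigma> q} = {k\<in>\<sigma> ` {1..p}. j < k}" by auto
  moreover have "finite ?new" by simp
  ultimately show ?thesis
    unfolding Inv by (simp only: prod.union_disjoint[OF finite_Inv _ disj])
qed

lemma prod_rank_insert:
  fixes w :: "nat \<Rightarrow> 'a :: comm_monoid_mult"
  assumes I: "finite I" "j \<notin> I"
  shows "(\<Prod>m\<in>insert j I. w m ^ card {k\<in>insert j I. k \<le> m})
    = w j ^ (card {k\<in>I. k < j} + 1) * (\<Prod>m\<in>I. w m ^ card {k\<in>I. k \<le> m}) * (\<Prod>k\<in>{k\<in>I. j < k}. w k)"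
proof -
  have card_j: "card {k\<in>insert j I. k \<le> j} = card {k\<in>I. k < j} + 1"
  proof -
    have "{k\<in>insert j I. k \<le> j} = insert j {k\<in>I. k < j}" using I by auto
    then show ?thesis using I by simp
  qed
  have card_m: "card {k\<in>insert j I. k \<le> m} = card {k\<in>I. k \<le> m} + (if j < m then 1 else 0)"
    if "m \<in> I" for m
  proof -
    have "{k\<in>insert j I. k \<le> m} = (if j < m then insert j {k\<in>I. k \<le> m} else {k\<in>I. k \<le> m})"
      using that I by auto
    then show ?thesis using I by simp
  qed
  have "(\<Prod>m\<in>insert j I. w m ^ card {k\<in>insert j I. k \<le> m})
      = w j ^ (card {k\<in>I. k < j} + 1) * (\<Prod>m\<in>I. w m ^ card {k\<in>insert j I. k \<le> m})"
    by (simp only: prod.insert[OF I] card_j)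
  also have "(\<Prod>m\<in>I. w m ^ card {k\<in>insert j I. k \<le> m})
      = (\<Prod>m\<in>I. w m ^ card {k\<in>I. k \<le> m} * (if j < m then w m else 1))"
  proof (rule prod.cong[OF refl])
    fix m assume "m \<in> I"
    then show "w m ^ card {k\<in>insert j I. k \<le> m} = w m ^ card {k\<in>I. k \<le> m} * (if j < m then w m else 1)"
      unfolding card_m[OF \<open>m \<in> I\<close>] by (simp add: power_add)
  qed
  also have "\<dots> = (\<Prod>m\<in>I. w m ^ card {k\<in>I. k \<le> m}) * (\<Prod>k\<in>{k\<in>I. j < k}. w k)"
    using I by (simp add: prod.distrib prod.inter_filter)
  finally show ?thesis by (simp only: mult.assoc)
qed

text \<open>The weight of a partial injection sigma of {1..p}. The last factor is what makes
  inj_weight_upd_Suc hold; for a permutation of {1..N} it is the constant prod_m (1/r m)^m.\<close>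

definition inj_weight :: "(nat \<Rightarrow> 'a :: field) \<Rightarrow> (nat \<Rightarrow> nat \<Rightarrow> 'a) \<Rightarrow> (nat \<Rightarrow> nat) \<Rightarrow> nat
    \<Rightarrow> (nat \<Rightarrow> nat) \<Rightarrow> 'a" where
  "inj_weight r g x p \<sigma> = (\<Prod>q\<in>{1..p}. r (\<sigma> q) ^ x q) * (\<Prod>(j, k)\<in>Inv p \<sigma>. g (\<sigma> k) (\<sigma> j))
    * (\<Prod>m\<in>\<sigma> ` {1..p}. (1 / r m) ^ card {k\<in>\<sigma> ` {1..p}. k \<le> m})"

lemma inj_weight_id_0: "inj_weight r g x 0 id = 1"
proof -
  have "Inv 0 id = {}" by (auto simp: Inv_def)
  then show ?thesis by (simp add: inj_weight_def)
qed

lemma inj_weight_upd_Suc: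
  assumes inj: "inj_on \<sigma> {1..p}" and j: "j \<notin> \<sigma> ` {1..p}" and r: "r j \<noteq> 0"
    and x: "Suc p \<le> x (Suc p)"
  shows "inj_weight r g x (Suc p) (\<sigma>(Suc p := j))
    = inj_weight r g x p \<sigma> * r j ^ (x (Suc p) - Suc p) * (\<Prod>k\<in>{k\<in>\<sigma> ` {1..p}. j < k}. r j / r k * g j k)"
proof -
  define I where "I = \<sigma> ` {1..p}"
  define below where "below = card {k\<in>I. k < j}"
  define above where "above = card {k\<in>I. j < k}"
  have I: "finite I" "j \<notin> I" using j by (auto simp: I_def)
  have "I = {k\<in>I. k < j} \<union> {k\<in>I. j < k}" using I by (auto simp: not_less_iff_gr_or_eq)
  moreover have "card ({k\<in>I. k < j} \<union> {k\<in>I. j < k}) = below + above"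
    unfolding below_def above_def by (rule card_Un_disjoint) (use I in auto)
  ultimately have "card I = below + above" by simp
  moreover have "card I = p" using inj by (simp add: I_def card_image)
  ultimately have x_split: "x (Suc p) = (x (Suc p) - Suc p) + above + (below + 1)"
    using x by linarith
  have "r j ^ (below + 1) * (1 / r j) ^ (below + 1) = 1"
    using r by (simp add: power_mult_distrib[symmetric])
  then have pow: "r j ^ x (Suc p) * (1 / r j) ^ (below + 1) = r j ^ (x (Suc p) - Suc p) * r j ^ above"
    by (subst x_split) (simp only: power_add mult.assoc mult_1_right)
  define P where "P = (\<Prod>q\<in>{1..p}. r (\<sigma> q) ^ x q)"
  define G where "G = (\<Prod>(a, b)\<in>Inv p \<sigma>. g (\<sigma> b) (\<sigma> a))"
  define R where "R = (\<Prod>m\<in>I. (1 / r m) ^ card {k\<in>I. k \<le> m})"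
  define Q where "Q = (\<Prod>k\<in>{k\<in>I. j < k}. 1 / r k)"
  define G' where "G' = (\<Prod>k\<in>{k\<in>I. j < k}. g j k)"
  have "(\<Prod>q\<in>{1..Suc p}. r ((\<sigma>(Suc p := j)) q) ^ x q) = P * r j ^ x (Suc p)"
    unfolding P_def by (simp add: prod.cl_ivl_Suc)
  then have "inj_weight r g x (Suc p) (\<sigma>(Suc p := j))
      = (P * r j ^ x (Suc p)) * (G * G') * ((1 / r j) ^ (below + 1) * R * Q)"
    unfolding inj_weight_def image_upd_Suc prod_Inv_upd_Suc[OF inj] prod_rank_insert[OF I[unfolded I_def]]
    by (simp only: I_def G_def G'_def R_def Q_def below_def)
  also have "\<dots> = (P * G * R) * (r j ^ x (Suc p) * (1 / r j) ^ (below + 1)) * (Q * G')"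
    by (simp only: ac_simps)
  also have "\<dots> = inj_weight r g x p \<sigma> * r j ^ (x (Suc p) - Suc p) * (r j ^ above * Q * G')"
    unfolding pow by (simp add: inj_weight_def P_def G_def R_def I_def ac_simps)
  also have "r j ^ above * Q * G' = (\<Prod>k\<in>{k\<in>I. j < k}. r j * (1 / r k) * g j k)"
    unfolding above_def Q_def G'_def by (simp only: prod.distrib prod_constant)
  also have "\<dots> = (\<Prod>k\<in>{k\<in>I. j < k}. r j / r k * g j k)"
    by simp
  finally show ?thesis unfolding I_def .
qed

lemma inj_weight_permutes:
  assumes \<sigma>: "\<sigma> permutes {1..N}"
  shows "inj_weight r g x N \<sigma> = (\<Prod>m = 1..N. (1 / r m) ^ m)
    * ((\<Prod>(j, k)\<in>Inv N \<sigma>. g (\<sigma> k) (\<sigma> j)) * (\<Prod>q = 1..N. r (\<sigma> q) ^ x q))"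
proof -
  have "card {k\<in>{1..N}. k \<le> m} = m" if "m \<in> {1..N}" for m
  proof -
    have "{k\<in>{1..N}. k \<le> m} = {1..m}" using that by auto
    then show ?thesis by simp
  qed
  then have "(\<Prod>m\<in>{1..N}. (1 / r m) ^ card {k\<in>{1..N}. k \<le> m}) = (\<Prod>m = 1..N. (1 / r m) ^ m)"
    by (intro prod.cong) auto
  then show ?thesis
    unfolding inj_weight_def permutes_image[OF \<sigma>] by (simp only: mult_ac)
qed

subsection \<open>Moving the C^{(j)} through a word\<close>

locale exchange_rels =
  fixes n N :: nat and A :: "complex mat" and Cj :: "nat \<Rightarrow> complex mat"
    and r :: "nat \<Rightarrow> complex" and g :: "nat \<Rightarrow> nat \<Rightarrow> complex"
  assumes A_carrier: "A \<in> carrier_mat n n"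
    and C_carrier: "\<And>j. j \<in> {1..N} \<Longrightarrow> Cj j \<in> carrier_mat n n"
    and C_A: "\<And>j. j \<in> {1..N} \<Longrightarrow> Cj j * A = r j \<cdot>\<^sub>m (A * Cj j)"
    and C_square: "\<And>j. j \<in> {1..N} \<Longrightarrow> Cj j * Cj j = 0\<^sub>m n n"
    and C_C: "\<And>j k. j \<in> {1..N} \<Longrightarrow> k \<in> {1..N} \<Longrightarrow> j \<noteq> k \<Longrightarrow>
      Cj j * Cj k = (r j / r k * g j k) \<cdot>\<^sub>m (Cj k * Cj j)"
begin

lemma A_pow_carrier: "A ^\<^sub>m p \<in> carrier_mat n n"
  using A_carrier by simp

lemma C_A_pow: "j \<in> {1..N} \<Longrightarrow> Cj j * A ^\<^sub>m p = r j ^ p \<cdot>\<^sub>m (A ^\<^sub>m p * Cj j)"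
proof (induction p)
  case 0
  then show ?case using C_carrier[OF 0] A_carrier by (simp add: one_smult_mat)
next
  case (Suc p)
  have C: "Cj j \<in> carrier_mat n n" using C_carrier[OF Suc.prems] .
  have "Cj j * A ^\<^sub>m Suc p = (Cj j * A ^\<^sub>m p) * A"
    using assoc_mult_mat[OF C A_pow_carrier A_carrier] by simp
  also have "\<dots> = r j ^ p \<cdot>\<^sub>m (A ^\<^sub>m p * (Cj j * A))"
    using Suc mult_smult_assoc_mat[OF mult_carrier_mat[OF A_pow_carrier C] A_carrier]
      assoc_mult_mat[OF A_pow_carrier C A_carrier] by simp
  also have "\<dots> = r j ^ Suc p \<cdot>\<^sub>m (A ^\<^sub>m Suc p * Cj j)"
    using C_A[OF Suc.prems] mult_smult_distrib[OF A_pow_carrier mult_carrier_mat[OF A_carrier C]]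
      assoc_mult_mat[OF A_pow_carrier A_carrier C]
    by (simp add: smult_smult_mat mult.commute)
  finally show ?case .
qed

definition Cprod :: "nat set \<Rightarrow> nat \<Rightarrow> complex mat" where
  "Cprod S m = mprod_desc n (\<lambda>k. if k \<in> S then Cj k else 1\<^sub>m n) m"

lemma Cprod_carrier: "m \<le> N \<Longrightarrow> Cprod S m \<in> carrier_mat n n"
  unfolding Cprod_def by (rule mprod_desc_carrier) (auto intro: C_carrier)

lemma Cprod_Suc: "Cprod S (Suc m) = (if Suc m \<in> S then Cj (Suc m) else 1\<^sub>m n) * Cprod S m"
  by (simp add: Cprod_def)

lemma Cprod_empty: "Cprod {} m = 1\<^sub>m n"
  by (induction m) (simp_all add: Cprod_def)

lemma Cprod_all: "Cprod {1..N} N = mprod_desc n Cj N"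
  unfolding Cprod_def by (rule mprod_desc_cong) simp

lemma C_Cprod_mem:
  "j \<in> S \<Longrightarrow> 1 \<le> j \<Longrightarrow> j \<le> m \<Longrightarrow> m \<le> N \<Longrightarrow> Cj j * Cprod S m = 0\<^sub>m n n"
proof (induction m)
  case (Suc m)
  have jN: "j \<in> {1..N}" using Suc.prems by simp
  have C: "Cj j \<in> carrier_mat n n" using C_carrier[OF jN] .
  have P: "Cprod S m \<in> carrier_mat n n" using Suc.prems by (intro Cprod_carrier) simp
  show ?case
  proof (cases "j = Suc m")
    case True
    have "Cj j * Cprod S (Suc m) = (Cj j * Cj j) * Cprod S m"
      using True Suc.prems C P by (simp add: Cprod_Suc)
    then show ?thesis using C_square[OF jN] P by simp
  next
    case False
    then have IH: "Cj j * Cprod S m = 0\<^sub>m n n" using Suc by simp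
    show ?thesis
    proof (cases "Suc m \<in> S")
      case True
      have mN: "Suc m \<in> {1..N}" using Suc.prems by simp
      have C': "Cj (Suc m) \<in> carrier_mat n n" using C_carrier[OF mN] .
      have "Cj j * Cprod S (Suc m) = (Cj j * Cj (Suc m)) * Cprod S m"
        using True C C' P by (simp add: Cprod_Suc)
      also have "\<dots> = (r j / r (Suc m) * g j (Suc m)) \<cdot>\<^sub>m (Cj (Suc m) * (Cj j * Cprod S m))"
        using C_C[OF jN mN False] C C' P by (simp add: mult_smult_assoc_mat[of _ n n _ n])
      finally show ?thesis using IH C' by simp
    next
      case False
      then show ?thesis using IH C P by (simp add: Cprod_Suc)
    qed
  qed
qed simp

lemma C_Cprod_not_mem:
  "j \<notin> S \<Longrightarrow> 1 \<le> j \<Longrightarrow> j \<le> m \<Longrightarrow> m \<le> N \<Longrightarrow>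
   Cj j * Cprod S m = (\<Prod>k\<in>{k\<in>S. j < k \<and> k \<le> m}. r j / r k * g j k) \<cdot>\<^sub>m Cprod (insert j S) m"
proof (induction m)
  case (Suc m)
  have jN: "j \<in> {1..N}" using Suc.prems by simp
  have C: "Cj j \<in> carrier_mat n n" using C_carrier[OF jN] .
  have P: "Cprod S m \<in> carrier_mat n n" "Cprod (insert j S) m \<in> carrier_mat n n"
    using Suc.prems by (auto intro: Cprod_carrier)
  show ?case
  proof (cases "j = Suc m")
    case True
    have e: "{k\<in>S. j < k \<and> k \<le> Suc m} = {}" using True by auto
    have "Cprod (insert j S) m = Cprod S m"
      unfolding Cprod_def using True by (intro mprod_desc_cong) auto
    then show ?thesis unfolding e using True Suc.prems P by (simp add: Cprod_Suc one_smult_mat)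
  next
    case False
    then have IH: "Cj j * Cprod S m
        = (\<Prod>k\<in>{k\<in>S. j < k \<and> k \<le> m}. r j / r k * g j k) \<cdot>\<^sub>m Cprod (insert j S) m"
      using Suc by simp
    show ?thesis
    proof (cases "Suc m \<in> S")
      case True
      have mN: "Suc m \<in> {1..N}" using Suc.prems by simp
      have C': "Cj (Suc m) \<in> carrier_mat n n" using C_carrier[OF mN] .
      have set: "{k\<in>S. j < k \<and> k \<le> Suc m} = insert (Suc m) {k\<in>S. j < k \<and> k \<le> m}"
        using True False Suc.prems by auto
      have "Cj j * Cprod S (Suc m) = (Cj j * Cj (Suc m)) * Cprod S m"
        using True C C' P by (simp add: Cprod_Suc)
      also have "\<dots> = (r j / r (Suc m) * g j (Suc m)) \<cdot>\<^sub>m (Cj (Suc m) * (Cj j * Cprod S m))"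
        using C_C[OF jN mN False] C C' P by (simp add: mult_smult_assoc_mat[of _ n n _ n])
      also have "\<dots> = (\<Prod>k\<in>{k\<in>S. j < k \<and> k \<le> Suc m}. r j / r k * g j k) \<cdot>\<^sub>m Cprod (insert j S) (Suc m)"
        unfolding IH set using True C' P by (simp add: Cprod_Suc mult_smult_distrib[of _ n n _ n] smult_smult_mat)
      finally show ?thesis .
    next
      case False
      then have "{k\<in>S. j < k \<and> k \<le> Suc m} = {k\<in>S. j < k \<and> k \<le> m}" "Suc m \<notin> insert j S"
        using \<open>j \<noteq> Suc m\<close> by (auto simp: le_Suc_eq)
      then show ?thesis using False IH C P by (simp add: Cprod_Suc)
    qed
  qed
qed simp

definition Csum :: "complex mat" where
  "Csum = msum_set n Cj {1..N}"

lemma Csum_carrier: "Csum \<in> carrier_mat n n"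
  by (simp add: Csum_def)

lemma Csum_A_pow_Cprod:
  assumes S: "S \<subseteq> {1..N}"
  shows "Csum * (A ^\<^sub>m G * Cprod S N)
    = msum_set n (\<lambda>j. (r j ^ G * (\<Prod>k\<in>{k\<in>S. j < k}. r j / r k * g j k)) \<cdot>\<^sub>m (A ^\<^sub>m G * Cprod (insert j S) N))
        ({1..N} - S)"
proof -
  have W: "A ^\<^sub>m G * Cprod T N \<in> carrier_mat n n" for T
    by (rule mult_carrier_mat[OF A_pow_carrier Cprod_carrier]) simp
  have single: "Cj j * (A ^\<^sub>m G * Cprod S N) = (if j \<in> S then 0\<^sub>m n n
      else (r j ^ G * (\<Prod>k\<in>{k\<in>S. j < k}. r j / r k * g j k)) \<cdot>\<^sub>m (A ^\<^sub>m G * Cprod (insert j S) N))"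
    if j: "j \<in> {1..N}" for j
  proof -
    have C: "Cj j \<in> carrier_mat n n" using C_carrier[OF j] .
    have P: "Cprod S N \<in> carrier_mat n n" by (rule Cprod_carrier) simp
    have "Cj j * (A ^\<^sub>m G * Cprod S N) = (Cj j * A ^\<^sub>m G) * Cprod S N"
      using assoc_mult_mat[OF C A_pow_carrier P] by simp
    also have "\<dots> = r j ^ G \<cdot>\<^sub>m (A ^\<^sub>m G * (Cj j * Cprod S N))"
      unfolding C_A_pow[OF j] using mult_smult_assoc_mat[OF mult_carrier_mat[OF A_pow_carrier C] P]
        assoc_mult_mat[OF A_pow_carrier C P] by simp
    finally have "Cj j * (A ^\<^sub>m G * Cprod S N) = r j ^ G \<cdot>\<^sub>m (A ^\<^sub>m G * (Cj j * Cprod S N))" .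
    moreover have "{k\<in>S. j < k \<and> k \<le> N} = {k\<in>S. j < k}" using S by auto
    ultimately show ?thesis
      using j A_pow_carrier[of G] Cprod_carrier[of N "insert j S"]
      by (simp add: right_mult_zero_mat[OF A_pow_carrier] C_Cprod_mem C_Cprod_not_mem mult_smult_distrib[of _ n n _ n] smult_smult_mat)
  qed
  have "Csum * (A ^\<^sub>m G * Cprod S N) = msum_set n (\<lambda>j. Cj j * (A ^\<^sub>m G * Cprod S N)) {1..N}"
    unfolding Csum_def by (rule msum_set_mult[OF W C_carrier])
  also have "\<dots> = msum_set n (\<lambda>j. if j \<in> S then 0\<^sub>m n n
      else (r j ^ G * (\<Prod>k\<in>{k\<in>S. j < k}. r j / r k * g j k)) \<cdot>\<^sub>m (A ^\<^sub>m G * Cprod (insert j S) N)) {1..N}"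
    by (rule msum_set_cong) (rule single)
  also have "\<dots> = msum_set n (\<lambda>j. (r j ^ G * (\<Prod>k\<in>{k\<in>S. j < k}. r j / r k * g j k))
      \<cdot>\<^sub>m (A ^\<^sub>m G * Cprod (insert j S) N)) ({1..N} - S)"
    by (rule msum_set_if_zero) simp
  finally show ?thesis .
qed

end

locale exchange_word = exchange_rels +
  fixes x :: "nat \<Rightarrow> nat"
  assumes r_nonzero: "\<And>j. j \<in> {1..N} \<Longrightarrow> r j \<noteq> 0"
    and x_mono: "\<And>j k. j \<in> {1..N} \<Longrightarrow> k \<in> {1..N} \<Longrightarrow> j < k \<Longrightarrow> x j < x k"
    and x_1: "1 \<le> x 1"
begin

definition word :: "nat \<Rightarrow> complex mat" where
  "word m = mprod_desc n (\<lambda>q. if q \<in> x ` {1..N} then Csum else A) m"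

definition xpos :: "nat \<Rightarrow> nat" where
  "xpos p = (if p = 0 then 0 else x p)"

lemma x_ge: "q \<in> {1..N} \<Longrightarrow> q \<le> x q"
proof (induction q)
  case (Suc q)
  show ?case
  proof (cases "q = 0")
    case False
    then have "q \<in> {1..N}" using Suc.prems by simp
    then show ?thesis using Suc x_mono[of q "Suc q"] by fastforce
  qed (use x_1 in simp)
qed simp

lemma xpos_ge: "p \<le> N \<Longrightarrow> p \<le> xpos p"
  using x_ge[of p] by (auto simp: xpos_def)

lemma xpos_less: "Suc p \<le> N \<Longrightarrow> xpos p < x (Suc p)"
  using x_ge[of "Suc p"] x_mono[of p "Suc p"] by (auto simp: xpos_def)

lemma not_occupied_gap:
  assumes "Suc p \<le> N" "xpos p < q" "q < x (Suc p)"
  shows "q \<notin> x ` {1..N}"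
proof
  assume "q \<in> x ` {1..N}"
  then obtain k where k: "k \<in> {1..N}" "q = x k" by auto
  show False
  proof (cases "k \<le> p")
    case True
    then have "x k \<le> x p" "p \<noteq> 0" using k assms x_mono[of k p] by (cases "k = p"; auto)+
    then show False using assms k by (simp add: xpos_def)
  next
    case False
    then have "x (Suc p) \<le> x k" using k assms x_mono[of "Suc p" k] by (cases "k = Suc p") auto
    then show False using assms k by simp
  qed
qed

lemma not_occupied_above: "x N < q \<Longrightarrow> q \<notin> x ` {1..N}"
  using x_mono[of _ N] by (fastforce simp: le_less)

lemma word_factor_carrier: "(if q \<in> x ` {1..N} then Csum else A) \<in> carrier_mat n n"
  using Csum_carrier A_carrier by simp

lemma word_Suc: "word (Suc m) = (if Suc m \<in> x ` {1..N} then Csum else A) * word m"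
  by (simp add: word_def)

lemma word_empty_sites:
  assumes "\<And>i. 1 \<le> i \<Longrightarrow> i \<le> l \<Longrightarrow> m + i \<notin> x ` {1..N}"
  shows "word (m + l) = A ^\<^sub>m l * word m"
proof -
  have "word (m + l) = mprod_desc n (\<lambda>i. if m + i \<in> x ` {1..N} then Csum else A) l * word m"
    unfolding word_def by (rule mprod_desc_add[OF word_factor_carrier])
  also have "mprod_desc n (\<lambda>i. if m + i \<in> x ` {1..N} then Csum else A) l = A ^\<^sub>m l"
    using assms by (simp add: mprod_desc_cong[where G = "\<lambda>_. A"] mprod_desc_const[OF A_carrier])
  finally show ?thesis .
qed

lemma word_step:
  assumes p: "Suc p \<le> N"
  shows "word (x (Suc p)) = Csum * (A ^\<^sub>m (x (Suc p) - xpos p - 1) * word (xpos p))"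
proof -
  define gap where "gap = x (Suc p) - xpos p - 1"
  have X: "x (Suc p) = Suc (xpos p + gap)" using xpos_less[OF p] by (simp add: gap_def)
  have "x (Suc p) \<in> x ` {1..N}" using p by simp
  then have "word (x (Suc p)) = Csum * word (xpos p + gap)"
    using word_Suc[of "xpos p + gap"] by (simp only: X[symmetric] if_True)
  also have "word (xpos p + gap) = A ^\<^sub>m gap * word (xpos p)"
    by (rule word_empty_sites) (use not_occupied_gap[OF p] X in auto)
  finally show ?thesis by (simp add: gap_def)
qed

lemma smult_Csum_A_pow_Cprod:
  assumes p: "Suc p \<le> N" and \<sigma>: "\<sigma> \<in> injs N p"
  shows "inj_weight r g x p \<sigma> \<cdot>\<^sub>m (Csum * (A ^\<^sub>m (x (Suc p) - Suc p) * Cprod (\<sigma> ` {1..p}) N))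
    = msum_set n (\<lambda>j. inj_weight r g x (Suc p) (\<sigma>(Suc p := j))
        \<cdot>\<^sub>m (A ^\<^sub>m (x (Suc p) - Suc p) * Cprod (\<sigma>(Suc p := j) ` {1..Suc p}) N)) ({1..N} - \<sigma> ` {1..p})"
proof -
  have S: "\<sigma> ` {1..p} \<subseteq> {1..N}" and inj: "inj_on \<sigma> {1..p}" using \<sigma> by (auto simp: injs_def)
  have weight: "inj_weight r g x (Suc p) (\<sigma>(Suc p := j)) = inj_weight r g x p \<sigma>
      * (r j ^ (x (Suc p) - Suc p) * (\<Prod>k\<in>{k\<in>\<sigma> ` {1..p}. j < k}. r j / r k * g j k))"
    if "j \<in> {1..N} - \<sigma> ` {1..p}" for j
  proof -
    have "j \<notin> \<sigma> ` {1..p}" "r j \<noteq> 0" "Suc p \<le> x (Suc p)"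
      using that r_nonzero x_ge[of "Suc p"] p by auto
    then show ?thesis using inj_weight_upd_Suc[OF inj] by (simp add: mult.assoc)
  qed
  have "A ^\<^sub>m k * Cprod T N \<in> carrier_mat n n" for k T
    by (rule mult_carrier_mat[OF A_pow_carrier Cprod_carrier]) simp
  then show ?thesis
    unfolding image_upd_Suc Csum_A_pow_Cprod[OF S]
    by (subst smult_msum_set) (auto intro!: msum_set_cong simp: smult_smult_mat weight)
qed

lemma word_xpos:
  "p \<le> N \<Longrightarrow> word (xpos p)
    = msum_set n (\<lambda>\<sigma>. inj_weight r g x p \<sigma> \<cdot>\<^sub>m (A ^\<^sub>m (xpos p - p) * Cprod (\<sigma> ` {1..p}) N)) (injs N p)"
proof (induction p)
  case 0
  have "word (xpos 0) = 1\<^sub>m n" by (simp add: xpos_def word_def)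
  then show ?case
    using A_carrier by (simp add: injs_0 inj_weight_id_0 Cprod_empty one_smult_mat msum_set_singleton xpos_def)
next
  case (Suc p)
  define gap where "gap = x (Suc p) - xpos p - 1"
  define W where "W (q :: nat) \<sigma> = A ^\<^sub>m (x (Suc p) - Suc p) * Cprod (\<sigma> ` {1..q}) N" for q \<sigma>
  have PC: "Cprod S N \<in> carrier_mat n n" for S by (rule Cprod_carrier) simp
  have WC: "W q \<sigma> \<in> carrier_mat n n" for q \<sigma>
    unfolding W_def by (rule mult_carrier_mat[OF A_pow_carrier PC])
  have pow: "A ^\<^sub>m gap * (A ^\<^sub>m (xpos p - p) * Cprod S N)
      = A ^\<^sub>m (x (Suc p) - Suc p) * Cprod S N" for S
  proof -
    have "gap + (xpos p - p) = x (Suc p) - Suc p"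
      using xpos_less[OF Suc.prems] xpos_ge[of p] Suc.prems unfolding gap_def by linarith
    then show ?thesis
      unfolding assoc_mult_mat[OF A_pow_carrier A_pow_carrier PC, symmetric] pow_mat_add[OF A_carrier]
      by simp
  qed
  have "word (xpos (Suc p)) = Csum * (A ^\<^sub>m gap * word (xpos p))"
    using word_step[OF Suc.prems, folded gap_def] by (simp add: xpos_def)
  also have "\<dots> = msum_set n (\<lambda>\<sigma>. inj_weight r g x p \<sigma> \<cdot>\<^sub>m (Csum * W p \<sigma>)) (injs N p)"
  proof -
    have c: "A ^\<^sub>m k * Cprod S N \<in> carrier_mat n n" for k S
      by (rule mult_carrier_mat[OF A_pow_carrier PC])
    have "A ^\<^sub>m gap * word (xpos p)
        = msum_set n (\<lambda>\<sigma>. inj_weight r g x p \<sigma> \<cdot>\<^sub>m W p \<sigma>) (injs N p)"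
      unfolding Suc.IH[OF Suc_leD[OF Suc.prems]]
      by (subst mult_msum_set[OF A_pow_carrier smult_carrier_mat[OF c]])
        (simp add: mult_smult_distrib[OF A_pow_carrier c] pow W_def)
    then show ?thesis
      using mult_smult_distrib[OF Csum_carrier WC]
      by (simp add: mult_msum_set[OF Csum_carrier smult_carrier_mat[OF WC]])
  qed
  also have "\<dots> = msum_set n (\<lambda>\<sigma>. msum_set n (\<lambda>j. inj_weight r g x (Suc p) (\<sigma>(Suc p := j))
      \<cdot>\<^sub>m W (Suc p) (\<sigma>(Suc p := j))) ({1..N} - \<sigma> ` {1..p})) (injs N p)"
    unfolding W_def by (rule msum_set_cong, rule smult_Csum_A_pow_Cprod[OF Suc.prems])
  also have "\<dots> = msum_set n (\<lambda>\<sigma>. inj_weight r g x (Suc p) \<sigma> \<cdot>\<^sub>m W (Suc p) \<sigma>) (injs N (Suc p))"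
    by (rule msum_set_injs_Suc)
  finally show ?case by (simp add: W_def xpos_def)
qed

lemma word_eq_sum_injs:
  assumes N: "0 < N" and M: "x N \<le> M"
  shows "word M = msum_set n (\<lambda>\<sigma>. inj_weight r g x N \<sigma> \<cdot>\<^sub>m (A ^\<^sub>m (M - N) * mprod_desc n Cj N)) (injs N N)"
proof -
  define Y where "Y = mprod_desc n Cj N"
  have Y: "Y \<in> carrier_mat n n" unfolding Y_def by (rule mprod_desc_carrier) (simp add: C_carrier)
  have pow: "A ^\<^sub>m (M - x N) * (A ^\<^sub>m (x N - N) * Y) = A ^\<^sub>m (M - N) * Y"
    unfolding assoc_mult_mat[OF A_pow_carrier A_pow_carrier Y, symmetric] pow_mat_add[OF A_carrier]
    using M x_ge[of N] N by simp
  have "word (x N + (M - x N)) = A ^\<^sub>m (M - x N) * word (x N)"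
    by (rule word_empty_sites) (use not_occupied_above in auto)
  then have "word M = A ^\<^sub>m (M - x N) * word (x N)" using M by simp
  also have "word (x N) = msum_set n (\<lambda>\<sigma>. inj_weight r g x N \<sigma> \<cdot>\<^sub>m (A ^\<^sub>m (x N - N) * Y)) (injs N N)"
  proof -
    have "Cprod (\<sigma> ` {1..N}) N = Y" if "\<sigma> \<in> injs N N" for \<sigma>
      using that Cprod_all by (simp add: injs_eq_permutes permutes_image Y_def)
    then show ?thesis
      using word_xpos[of N] N by (simp add: xpos_def cong: msum_set_cong)
  qed
  also have "A ^\<^sub>m (M - x N) * \<dots> = msum_set n (\<lambda>\<sigma>. inj_weight r g x N \<sigma> \<cdot>\<^sub>m (A ^\<^sub>m (M - N) * Y)) (injs N N)"
    by (subst mult_msum_set[OF A_pow_carrier smult_carrier_mat[OF mult_carrier_mat[OF A_pow_carrier Y]]])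
      (simp add: mult_smult_distrib[OF A_pow_carrier mult_carrier_mat[OF A_pow_carrier Y]] pow)
  finally show ?thesis unfolding Y_def .
qed

lemma index_word:
  assumes "0 < N" "x N \<le> M" "i < n" "k < n"
  shows "word M $$ (i, k) = (\<Sum>\<sigma>\<in>injs N N. inj_weight r g x N \<sigma>) * (A ^\<^sub>m (M - N) * mprod_desc n Cj N) $$ (i, k)"
proof -
  have "mprod_desc n Cj N \<in> carrier_mat n n" by (rule mprod_desc_carrier) (simp add: C_carrier)
  then show ?thesis
    using word_eq_sum_injs[OF assms(1,2)] assms(3,4) A_carrier
    by (simp add: index_msum_set sum_distrib_right)
qed

end

lemma mtrace_Qmat: "Y \<in> carrier_mat (2 ^ N) (2 ^ N) \<Longrightarrow> mtrace (Qmat N * Y) = Y $$ (0, 2 ^ N - 1)"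
proof -
  assume Y: "Y \<in> carrier_mat (2 ^ N) (2 ^ N)"
  have Q: "Qmat N \<in> carrier_mat (2 ^ N) (2 ^ N)" by (simp add: Qmat_def)
  have "(Qmat N * Y) $$ (i, i) = (if i = 2 ^ N - 1 then Y $$ (0, i) else 0)" if i: "i < 2 ^ N" for i
  proof -
    have "(Qmat N * Y) $$ (i, i) = (\<Sum>k<(2::nat) ^ N. if k = 0 then (if i = 2 ^ N - 1 then Y $$ (0, i) else 0) else 0)"
      unfolding index_mult_mat_square[OF Q Y i i] by (intro sum.cong) (use i in \<open>auto simp: Qmat_def\<close>)
    then show ?thesis by (simp add: sum.delta)
  qed
  then have "mtrace (Qmat N * Y) = (\<Sum>i<(2::nat) ^ N. if i = 2 ^ N - 1 then Y $$ (0, i) else 0)"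
    using Q by (simp add: mtrace_def)
  then show ?thesis by (simp add: sum.delta)
qed

lemma mtrace_Qmat_mult:
  assumes B: "B \<in> carrier_mat (2 ^ N) (2 ^ N)" and C: "C \<in> carrier_mat (2 ^ N) (2 ^ N)"
  shows "mtrace (Qmat N * B * C) = (B * C) $$ (0, 2 ^ N - 1)"
proof -
  have Q: "Qmat N \<in> carrier_mat (2 ^ N) (2 ^ N)" by (simp add: Qmat_def)
  show ?thesis
    unfolding assoc_mult_mat[OF Q B C] by (rule mtrace_Qmat[OF mult_carrier_mat[OF B C]])
qed

text \<open>The relations between t, a, ..., f and the genericity of the u_j are only needed for the
  existence of the C^{(j)}, which is assumed here.\<close>

theorem mainTheorem3:
  fixes t a b c d e f :: complex and M N :: nat and u :: "nat \<Rightarrow> complex"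
    and Cj :: "nat \<Rightarrow> complex mat" and x :: "nat \<Rightarrow> nat"
  assumes nz: "t \<noteq> 0" "a \<noteq> 0" "b \<noteq> 0" "c \<noteq> 0" "d \<noteq> 0" "e \<noteq> 0" "f \<noteq> 0"
    and t1: "t \<noteq> 1"
    and rel1: "c * d + a * f = 0" and rel2: "t * c * d + b * e = 0"
    and NM: "1 \<le> N" "N \<le> M"
    and distinct: "\<And>j k. j \<in> {1..N} \<Longrightarrow> k \<in> {1..N} \<Longrightarrow> j \<noteq> k \<Longrightarrow> u j \<noteq> u k"
    and nza: "\<And>j. j \<in> {1..N} \<Longrightarrow> a * u j + b \<noteq> 0"
    and nze: "\<And>j. j \<in> {1..N} \<Longrightarrow> e * u j + f \<noteq> 0"
    and tu: "\<And>j k. j \<in> {1..N} \<Longrightarrow> k \<in> {1..N} \<Longrightarrow> j \<noteq> k \<Longrightarrow> t * u j \<noteq> u k"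
    and Cdim: "\<And>j. j \<in> {1..N} \<Longrightarrow> Cj j \<in> carrier_mat (2 ^ N) (2 ^ N)"
    and Csum: "msum (2 ^ N) Cj N = snd (AC t a b c d e f u N)"
    and CA: "\<And>j. j \<in> {1..N} \<Longrightarrow>
       Cj j * fst (AC t a b c d e f u N)
         = ((e * u j + f) / (a * u j + b)) \<cdot>\<^sub>m (fst (AC t a b c d e f u N) * Cj j)"
    and Csq: "\<And>j. j \<in> {1..N} \<Longrightarrow> Cj j * Cj j = 0\<^sub>m (2 ^ N) (2 ^ N)"
    and CC: "\<And>j k. j \<in> {1..N} \<Longrightarrow> k \<in> {1..N} \<Longrightarrow> j \<noteq> k \<Longrightarrow>
       Cj j * Cj k
         = (((e * u j + f) * (a * u k + b) * (u j - t * u k))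
             / ((a * u j + b) * (e * u k + f) * (t * u j - u k))) \<cdot>\<^sub>m (Cj k * Cj j)"
    and x_mono: "\<And>j k. j \<in> {1..N} \<Longrightarrow> k \<in> {1..N} \<Longrightarrow> j < k \<Longrightarrow> x j < x k"
    and x_range: "1 \<le> x 1" "x N \<le> M"
  shows "Bstate t a b c d e f M u N (cfg M (x ` {1..N}))
    = ((\<Prod>j = 1..N. ((a * u j + b) / (e * u j + f)) ^ j)
        * mtrace (Qmat N * (fst (AC t a b c d e f u N) ^\<^sub>m (M - N)) * mprod_desc (2 ^ N) Cj N))
      * (\<Sum>\<sigma> | \<sigma> permutes {1..N}.
           (\<Prod>(j, k) \<in> Inv N \<sigma>. (u (\<sigma> k) - t * u (\<sigma> j)) / (t * u (\<sigma> k) - u (\<sigma> j)))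
           * (\<Prod>j = 1..N. ((e * u (\<sigma> j) + f) / (a * u (\<sigma> j) + b)) ^ x j))"
proof -
  define A where "A = fst (AC t a b c d e f u N)"
  define Y where "Y = mprod_desc (2 ^ N) Cj N"
  define r where "r j = (e * u j + f) / (a * u j + b)" for j
  define g where "g j k = (u j - t * u k) / (t * u j - u k)" for j k
  have coeff: "r j / r k * g j k = ((e * u j + f) * (a * u k + b) * (u j - t * u k))
      / ((a * u j + b) * (e * u k + f) * (t * u j - u k))" for j k
    unfolding r_def g_def by (simp add: divide_divide_times_eq times_divide_times_eq mult_ac)
  interpret exchange_word "2 ^ N" N A Cj r g x
  proof unfold_locales
    show "Cj j * Cj k = (r j / r k * g j k) \<cdot>\<^sub>m (Cj k * Cj j)"
      if "j \<in> {1..N}" "k \<in> {1..N}" "j \<noteq> k" for j k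
      using CC[OF that] by (simp only: coeff)
  qed (use Cdim CA Csq x_mono x_range nza nze AC_sel_carrier[of t a b c d e f u N 0] in
      \<open>simp_all add: A_def r_def AC_sel_def\<close>)
  have "Csum = snd (AC t a b c d e f u N)"
    using Csum msum_eq_msum_set[of N Cj "2 ^ N"] Cdim by (simp add: Csum_def)
  then have "mprod_desc (2 ^ N)
      (\<lambda>s. if s \<in> x ` {1..N} then snd (AC t a b c d e f u N) else fst (AC t a b c d e f u N)) M = word M"
    unfolding word_def by (intro mprod_desc_cong) (simp add: A_def)
  then have "Bstate t a b c d e f M u N (cfg M (x ` {1..N})) = word M $$ (0, 2 ^ N - 1)"
    by (simp add: Bstate_cfg)
  also have "\<dots> = (\<Sum>\<sigma>\<in>injs N N. inj_weight r g x N \<sigma>) * (A ^\<^sub>m (M - N) * Y) $$ (0, 2 ^ N - 1)"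
    using index_word NM x_range by (simp add: Y_def)
  also have "(A ^\<^sub>m (M - N) * Y) $$ (0, 2 ^ N - 1) = mtrace (Qmat N * A ^\<^sub>m (M - N) * Y)"
    using mtrace_Qmat_mult[OF A_pow_carrier mprod_desc_carrier] Cdim by (simp add: Y_def)
  also have "(\<Sum>\<sigma>\<in>injs N N. inj_weight r g x N \<sigma>) = (\<Prod>j = 1..N. ((a * u j + b) / (e * u j + f)) ^ j)
      * (\<Sum>\<sigma> | \<sigma> permutes {1..N}.
           (\<Prod>(j, k) \<in> Inv N \<sigma>. (u (\<sigma> k) - t * u (\<sigma> j)) / (t * u (\<sigma> k) - u (\<sigma> j)))
           * (\<Prod>j = 1..N. ((e * u (\<sigma> j) + f) / (a * u (\<sigma> j) + b)) ^ x j))"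
    unfolding injs_eq_permutes sum_distrib_left
    by (intro sum.cong refl) (simp add: inj_weight_permutes r_def g_def)
  finally show ?thesis by (simp add: A_def Y_def mult_ac)
qed

end
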